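(* Let $G$ be a connected $(c,d)$-biregular simple graph with $n$ vertices and $m$ edges, and let $\lambda_1\ge\lambda_2\ge\cdots\ge\lambda_n$ be its adjacency eigenvalues (so $\lambda_1=\sqrt{cd}$). Then the Kemeny's constant of the simple random walk on the edge space of $G$ is \[ \mathscr{K}_e(G)=2m-n+\sum_{i=2}^{n}\frac{\sqrt{cd}}{\sqrt{cd}-\lambda_i}. \]
   Context: A $(c,d)$-biregular graph is a bipartite graph in which every vertex in one part of the bipartition has degree $c$ and every vertex in the other part has degree $d$. Kemeny's constant of an irreducible finite Markov chain with transition matrix $P$ whose eigenvalues (with multiplicity) are $1=\rho_1,\rho_2,\dots,\rho_N$ (with $1$ simple) is $\mathscr{K}(P)=\sum_{i=2}^{N}\frac{1}{1-\rho_i}$. $\mathscr{K}_e(G)$ is Kemeny's constant of the simple random walk on the arcs of $G$ (the ordered pairs $(u,v)$ with $\{u,v\}$ an edge), where from $(u,v)$ one moves to $(v,w)$ with probability $1/\deg(v)$ for each neighbor $w$ of $v$. *)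

theory Defs
  imports "Jordan_Normal_Form.Char_Poly"
begin

definition simple_graph :: "'a set \<Rightarrow> 'a set set \<Rightarrow> bool" where
  "simple_graph V E \<longleftrightarrow> finite V \<and> (\<forall>e\<in>E. \<exists>u v. e = {u, v} \<and> u \<noteq> v \<and> u \<in> V \<and> v \<in> V)"

definition adj :: "'a set set \<Rightarrow> 'a \<Rightarrow> 'a \<Rightarrow> bool" where
  "adj E u v \<longleftrightarrow> {u, v} \<in> E"

definition degree :: "'a set set \<Rightarrow> 'a \<Rightarrow> nat" where
  "degree E v = card {w. {v, w} \<in> E}"

definition connected_graph :: "'a set \<Rightarrow> 'a set set \<Rightarrow> bool" where
  "connected_graph V E \<longleftrightarrow> V \<noteq> {} \<and> (\<forall>u\<in>V. \<forall>v\<in>V. (adj E)\<^sup>*\<^sup>* u v)"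

definition biregular :: "'a set \<Rightarrow> 'a set set \<Rightarrow> nat \<Rightarrow> nat \<Rightarrow> bool" where
  "biregular V E c d \<longleftrightarrow> (\<exists>X Y. X \<union> Y = V \<and> X \<inter> Y = {} \<and>
     (\<forall>e\<in>E. \<exists>x\<in>X. \<exists>y\<in>Y. e = {x, y}) \<and>
     (\<forall>x\<in>X. degree E x = c) \<and> (\<forall>y\<in>Y. degree E y = d))"

definition arcs :: "'a set set \<Rightarrow> ('a \<times> 'a) set" where
  "arcs E = {(u, v). {u, v} \<in> E}"

(* a fixed (arbitrary) enumeration of a finite set; characteristic polynomials
   below do not depend on the choice *)
definition enum_set :: "'b set \<Rightarrow> 'b list" where
  "enum_set S = (SOME xs. set xs = S \<and> distinct xs)"

definition mat_on :: "'b set \<Rightarrow> ('b \<Rightarrow> 'b \<Rightarrow> 'c) \<Rightarrow> 'c mat" where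
  "mat_on S f = mat (card S) (card S) (\<lambda>(i, j). f (enum_set S ! i) (enum_set S ! j))"

definition eigenvalues_mset :: "complex mat \<Rightarrow> complex multiset" where
  "eigenvalues_mset A = proots (char_poly A)"

definition kemeny :: "complex mat \<Rightarrow> complex" where
  "kemeny P = (\<Sum>\<rho> \<in># eigenvalues_mset P - {#1#}. 1 / (1 - \<rho>))"

definition adjacency_matrix :: "'a set \<Rightarrow> 'a set set \<Rightarrow> complex mat" where
  "adjacency_matrix V E = mat_on V (\<lambda>u v. if {u, v} \<in> E then 1 else 0)"

(* simple random walk on arcs: (u,v) \<mapsto> (v,w) with prob 1/deg v, w a neighbour of v *)
definition arc_walk_matrix :: "'a set set \<Rightarrow> complex mat" where
  "arc_walk_matrix E = mat_on (arcs E)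
     (\<lambda>(u, v) (x, w). if x = v \<and> {v, w} \<in> E then 1 / of_nat (degree E v) else 0)"

definition kemeny_edge :: "'a set set \<Rightarrow> complex" where
  "kemeny_edge E = kemeny (arc_walk_matrix E)"

end

theory Submission
  imports Defs "Jordan_Normal_Form.Jordan_Normal_Form_Existence"
begin

text \<open>The arc walk factors as \<open>P = H T\<close>, where \<open>H\<close> sends an arc to its head and \<open>T\<close> sends
  a vertex to the uniform distribution on its outgoing arcs, while \<open>Q = T H\<close> is the simple
  random walk on the vertices. The products \<open>H T\<close> and \<open>T H\<close> have the same nonzero eigenvalues,
  and \<open>P\<close> has \<open>2m - n\<close> more zero eigenvalues, each contributing \<open>1\<close> to Kemeny's constant;
  hence \<open>K(P) = K(Q) + 2m - n\<close>. On a \<open>(c,d)\<close>-biregular graph, conjugation by the diagonal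
  matrix of square roots of degrees turns \<open>Q\<close> into \<open>A / \<surd>(c d)\<close>, so the eigenvalues of \<open>Q\<close>
  are \<open>\<lambda>\<^sub>i / \<surd>(c d)\<close>; as \<open>Q\<close> is stochastic, the largest of them is \<open>1\<close>.\<close>

section \<open>Characteristic polynomials and eigenvalues\<close>

lemma char_poly_mult_commute:
  fixes H :: "'a::field mat"
  assumes H: "H \<in> carrier_mat N n" and T: "T \<in> carrier_mat n N"
  shows "[:0,1:] ^ N * char_poly (T * H) = [:0,1:] ^ n * char_poly (H * T)"
proof -
  define x :: "'a poly" where "x = [:0,1:]"
  define h where "h = map_mat (\<lambda>a. [:a:]) H"
  define t where "t = map_mat (\<lambda>a. [:a:]) T"
  have h: "h \<in> carrier_mat N n" and t: "t \<in> carrier_mat n N"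
    using H T by (auto simp: h_def t_def)
  have const_neg: "map_mat (\<lambda>a. [:-a:]) B = - map_mat (\<lambda>a. [:a:]) B" for B :: "'a mat"
    by (rule eq_matI) auto
  have cpHT: "char_poly_matrix (H * T) = x \<cdot>\<^sub>m 1\<^sub>m N + - (h * t)"
    using H T unfolding char_poly_matrix_def x_def h_def t_def const_neg
    by (simp add: map_poly_mult(1)[OF H T])
  have cpTH: "char_poly_matrix (T * H) = x \<cdot>\<^sub>m 1\<^sub>m n + - (t * h)"
    using H T unfolding char_poly_matrix_def x_def h_def t_def const_neg
    by (simp add: map_poly_mult(1)[OF T H])
  have D1: "x \<cdot>\<^sub>m 1\<^sub>m N + - (h * t) \<in> carrier_mat N N"
    and D2: "x \<cdot>\<^sub>m 1\<^sub>m n + - (t * h) \<in> carrier_mat n n" using t h by auto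
  text \<open>Both characteristic polynomials are the determinant of the block matrix
    \<open>M = [1, h; t, x]\<close>, computed by eliminating either off-diagonal block.\<close>
  note block_mult = mult_four_block_mat[where ?nr1.0 = N and ?n1.0 = N and ?n2.0 = n
    and ?nr2.0 = n and ?nc1.0 = N and ?nc2.0 = n]
  define M where "M = four_block_mat (1\<^sub>m N) h t (x \<cdot>\<^sub>m 1\<^sub>m n)"
  define L where "L = four_block_mat (x \<cdot>\<^sub>m 1\<^sub>m N) (- h) (0\<^sub>m n N) (1\<^sub>m n)"
  define U1 where "U1 = four_block_mat (1\<^sub>m N) (0\<^sub>m N n) t (1\<^sub>m n)"
  define U2 where "U2 = four_block_mat (1\<^sub>m N) h (0\<^sub>m n N) (x \<cdot>\<^sub>m 1\<^sub>m n + - (t * h))"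
  have LM: "L * M = four_block_mat (x \<cdot>\<^sub>m 1\<^sub>m N + - (h * t)) (0\<^sub>m N n) t (x \<cdot>\<^sub>m 1\<^sub>m n)"
    unfolding M_def L_def using h t
    by (subst block_mult) (auto intro!: cong_four_block_mat)
  have MU: "M = U1 * U2"
    unfolding M_def U1_def U2_def using h t D2
    by (subst block_mult) auto
  have carriers: "L \<in> carrier_mat (N+n) (N+n)" "M \<in> carrier_mat (N+n) (N+n)"
    "U1 \<in> carrier_mat (N+n) (N+n)" "U2 \<in> carrier_mat (N+n) (N+n)"
    unfolding L_def M_def U1_def U2_def using h t D2 by auto
  have "det L = x ^ N"
    unfolding L_def using h by (subst det_four_block_mat_lower_left_zero[where n=N and m=n]) auto
  moreover have "det (L * M) = char_poly (H * T) * x ^ n"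
    unfolding LM char_poly_def cpHT using t D1
    by (subst det_four_block_mat_upper_right_zero[where n=N and m=n]) auto
  moreover have "det M = char_poly (T * H)"
  proof -
    have "det U1 = 1"
      unfolding U1_def using t by (subst det_four_block_mat_upper_right_zero[where n=N and m=n]) auto
    moreover have "det U2 = char_poly (T * H)"
      unfolding U2_def char_poly_def cpTH using h D2
      by (subst det_four_block_mat_lower_left_zero[where n=N and m=n]) auto
    ultimately show ?thesis unfolding MU det_mult[OF carriers(3,4)] by simp
  qed
  ultimately have "x ^ N * char_poly (T * H) = char_poly (H * T) * x ^ n"
    using det_mult[OF carriers(1,2)] by simp
  thus ?thesis unfolding x_def by (simp add: mult.commute)
qed

lemma char_poly_nonzero: "A \<in> carrier_mat n n \<Longrightarrow> char_poly A \<noteq> 0"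
  using degree_monic_char_poly[of A n] by auto

lemma eigenvalues_mset_mult_commute:
  fixes H :: "complex mat"
  assumes "H \<in> carrier_mat N n" and "T \<in> carrier_mat n N"
  shows "replicate_mset N 0 + eigenvalues_mset (T * H) = replicate_mset n 0 + eigenvalues_mset (H * T)"
proof -
  have "proots ([:0,1:] ^ N * char_poly (T * H)) = proots ([:0,1:] ^ n * char_poly (H * T))"
    using char_poly_mult_commute[OF assms] by simp
  thus ?thesis
    using char_poly_nonzero[of "T * H" n] char_poly_nonzero[of "H * T" N] assms
    unfolding eigenvalues_mset_def
    by (simp add: proots_mult proots_power proots_linear_factor[of 0, simplified])
qed

text \<open>With the convention \<open>1 / 0 = 0\<close>, the copy of \<open>1\<close> removed in the definition of
  Kemeny's constant contributes nothing, so it may equally be kept.\<close>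
lemma kemeny_eq_sum_eigenvalues: "kemeny P = (\<Sum>\<rho>\<in>#eigenvalues_mset P. 1 / (1 - \<rho>))"
proof (cases "1 \<in># eigenvalues_mset P")
  case True
  then have "eigenvalues_mset P = add_mset 1 (eigenvalues_mset P - {#1#})" by simp
  then show ?thesis unfolding kemeny_def by (metis (no_types, lifting) add_0 diff_self
    div_by_0 image_mset_add_mset sum_mset.insert)
qed (simp add: kemeny_def)

lemma kemeny_mult_commute:
  fixes H :: "complex mat"
  assumes "H \<in> carrier_mat N n" and "T \<in> carrier_mat n N"
  shows "kemeny (H * T) = kemeny (T * H) + of_nat N - of_nat n"
  using arg_cong[OF eigenvalues_mset_mult_commute[OF assms], of "\<lambda>M. \<Sum>\<rho>\<in>#M. 1 / (1 - \<rho>)"]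
  unfolding kemeny_eq_sum_eigenvalues by (simp add: algebra_simps)

lemma count_image_mset_inj: "inj f \<Longrightarrow> count (image_mset f M) (f x) = count M x"
  by (induction M) (auto simp: inj_eq)

lemma eigenvalues_mset_smult:
  fixes A :: "complex mat"
  assumes A: "A \<in> carrier_mat n n" and k: "k \<noteq> 0"
  shows "eigenvalues_mset (k \<cdot>\<^sub>m A) = image_mset ((*) k) (eigenvalues_mset A)"
proof (rule multiset_eqI)
  fix z
  have "count (eigenvalues_mset (k \<cdot>\<^sub>m A)) z = order (z / k) (char_poly A)"
    unfolding eigenvalues_mset_def using order_char_poly_smult[OF A k] A
    by (simp add: char_poly_nonzero[of _ n])
  also have "\<dots> = count (image_mset ((*) k) (eigenvalues_mset A)) (k * (z / k))"
    using k A by (subst count_image_mset_inj) (auto simp: inj_def eigenvalues_mset_def char_poly_nonzero)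
  finally show "count (eigenvalues_mset (k \<cdot>\<^sub>m A)) z = count (image_mset ((*) k) (eigenvalues_mset A)) z"
    using k by simp
qed

lemma similar_mat_diag_scaling:
  fixes A :: "'a::field mat"
  assumes A: "A \<in> carrier_mat n n" and \<sigma>: "\<And>i. i < n \<Longrightarrow> \<sigma> i \<noteq> 0"
  shows "similar_mat (mat n n (\<lambda>(i, j). A $$ (i, j) * \<sigma> j / \<sigma> i)) A"
proof -
  let ?P = "mat_diag n (\<lambda>i. 1 / \<sigma> i)" and ?Q = "mat_diag n \<sigma>"
  have inverse: "?P * ?Q = 1\<^sub>m n" "?Q * ?P = 1\<^sub>m n"
    by (simp_all, auto intro!: eq_matI simp: mat_diag_def \<sigma>)
  have conj: "mat n n (\<lambda>(i, j). A $$ (i, j) * \<sigma> j / \<sigma> i) = ?P * A * ?Q"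
    using A by (auto simp: mat_diag_mult_left[of _ n n] mat_diag_mult_right[of _ n n] intro!: eq_matI)
  have "similar_mat_wit (mat n n (\<lambda>(i, j). A $$ (i, j) * \<sigma> j / \<sigma> i)) A ?P ?Q"
    using A by (intro similar_mat_witI[OF inverse conj]) auto
  thus ?thesis unfolding similar_mat_def by blast
qed

section \<open>Row-stochastic matrices\<close>

lemma index_of_real_mat_mult_vec:
  assumes "R \<in> carrier_mat n n" "i < n" "v \<in> carrier_vec n"
  shows "(map_mat complex_of_real R *\<^sub>v v) $ i = (\<Sum>j < n. of_real (R $$ (i, j)) * v $ j)"
proof -
  have "(map_mat complex_of_real R *\<^sub>v v) $ i = (\<Sum>j\<in>{0..<n}. row (map_mat complex_of_real R) i $ j * v $ j)"
    using assms by (simp add: scalar_prod_def)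
  also have "\<dots> = (\<Sum>j < n. of_real (R $$ (i, j)) * v $ j)"
    using assms by (simp add: atLeast0LessThan)
  finally show ?thesis .
qed

definition row_stochastic :: "real mat \<Rightarrow> bool" where
  "row_stochastic R \<longleftrightarrow>
     (\<forall>i < dim_row R. (\<forall>j < dim_col R. 0 \<le> R $$ (i, j)) \<and> (\<Sum>j < dim_col R. R $$ (i, j)) = 1)"

lemma row_stochastic_eigenvalue_one:
  assumes R: "R \<in> carrier_mat n n" "row_stochastic R" and n: "0 < n"
  shows "eigenvalue (map_mat complex_of_real R) 1"
proof -
  have "map_mat complex_of_real R *\<^sub>v vec n (\<lambda>_. 1) = 1 \<cdot>\<^sub>v vec n (\<lambda>_. 1)"
  proof (rule eq_vecI)
    fix i assume "i < dim_vec (1 \<cdot>\<^sub>v vec n (\<lambda>_. 1 :: complex))"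
    then have i: "i < n" by simp
    have "(map_mat complex_of_real R *\<^sub>v vec n (\<lambda>_. 1)) $ i = of_real (\<Sum>j < n. R $$ (i, j))"
      using index_of_real_mat_mult_vec[OF R(1) i, of "vec n (\<lambda>_. 1)"] by simp
    also have "\<dots> = 1"
      using i R unfolding row_stochastic_def by simp
    finally show "(map_mat complex_of_real R *\<^sub>v vec n (\<lambda>_. 1)) $ i = (1 \<cdot>\<^sub>v vec n (\<lambda>_. 1)) $ i"
      using i by simp
  qed (use R in simp)
  moreover have "vec n (\<lambda>_. 1 :: complex) \<noteq> 0\<^sub>v n"
  proof
    assume eq: "vec n (\<lambda>_. 1 :: complex) = 0\<^sub>v n"
    have "(1 :: complex) = vec n (\<lambda>_. 1) $ 0" using n by simp
    also have "\<dots> = 0\<^sub>v n $ 0" by (simp only: eq)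
    also have "\<dots> = 0" using n by simp
    finally show False by simp
  qed
  ultimately show ?thesis
    using R unfolding eigenvalue_def eigenvector_def
    by (intro exI[of _ "vec n (\<lambda>_. 1)"]) auto
qed

lemma row_stochastic_eigenvalue_norm_le_1:
  assumes R: "R \<in> carrier_mat n n" "row_stochastic R"
    and \<mu>: "eigenvalue (map_mat complex_of_real R) \<mu>"
  shows "cmod \<mu> \<le> 1"
proof -
  obtain v where v: "v \<in> carrier_vec n" "v \<noteq> 0\<^sub>v n"
    and eigen: "map_mat complex_of_real R *\<^sub>v v = \<mu> \<cdot>\<^sub>v v"
    using \<mu> R(1) unfolding eigenvalue_def eigenvector_def by auto
  have "\<exists>j < n. v $ j \<noteq> 0"
  proof (rule ccontr)
    assume "\<not> (\<exists>j < n. v $ j \<noteq> 0)"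
    then have "v = 0\<^sub>v n" using v(1) by (intro eq_vecI) auto
    with v(2) show False ..
  qed
  then obtain j0 where j0: "j0 < n" "v $ j0 \<noteq> 0" by blast
  define m where "m = Max ((\<lambda>j. cmod (v $ j)) ` {..<n})"
  have le_m: "cmod (v $ j) \<le> m" if "j < n" for j
    unfolding m_def using that by (intro Max_ge) auto
  have "m \<in> (\<lambda>j. cmod (v $ j)) ` {..<n}"
    unfolding m_def using j0(1) by (intro Max_in) auto
  then obtain k where k: "k < n" "cmod (v $ k) = m" by auto
  have m_pos: "0 < m"
    using le_m[OF j0(1)] j0(2) by (meson zero_less_norm_iff order_less_le_trans)
  have "cmod \<mu> * m = cmod (\<mu> * v $ k)"
    using k by (simp add: norm_mult)
  also have "\<mu> * v $ k = (\<Sum>j < n. of_real (R $$ (k, j)) * v $ j)"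
    using arg_cong[OF eigen, of "\<lambda>w. w $ k"] index_of_real_mat_mult_vec[OF R(1) k(1) v(1)] k v(1)
    by simp
  also have "cmod \<dots> \<le> (\<Sum>j < n. cmod (of_real (R $$ (k, j)) * v $ j))"
    by (rule norm_sum)
  also have "\<dots> \<le> (\<Sum>j < n. R $$ (k, j) * m)"
    using R k le_m unfolding row_stochastic_def
    by (intro sum_mono) (auto simp: norm_mult intro!: mult_left_mono)
  also have "\<dots> = m"
    using R k unfolding row_stochastic_def by (simp flip: sum_distrib_right)
  finally show ?thesis using m_pos by simp
qed

lemma eigenvalue_iff_mem_eigenvalues_mset:
  "A \<in> carrier_mat n n \<Longrightarrow> eigenvalue A \<mu> \<longleftrightarrow> \<mu> \<in># eigenvalues_mset A"
  by (simp add: eigenvalue_root_char_poly eigenvalues_mset_def char_poly_nonzero)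

lemma row_stochastic_top_eigenvalue:
  assumes R: "R \<in> carrier_mat n n" "row_stochastic R" and n: "0 < n"
    and eig: "eigenvalues_mset (map_mat complex_of_real R) = image_mset (\<lambda>i. of_real (\<mu> i)) (mset_set {1..n})"
    and sorted: "\<And>i j. 1 \<le> i \<Longrightarrow> i \<le> j \<Longrightarrow> j \<le> n \<Longrightarrow> \<mu> j \<le> \<mu> i"
  shows "\<mu> 1 = 1"
proof -
  have R': "map_mat complex_of_real R \<in> carrier_mat n n" using R(1) by simp
  have "1 \<in># eigenvalues_mset (map_mat complex_of_real R)"
    using row_stochastic_eigenvalue_one[OF R n] eigenvalue_iff_mem_eigenvalues_mset[OF R'] by simp
  then obtain i where i: "i \<in> {1..n}" "\<mu> i = 1" unfolding eig by auto
  have "of_real (\<mu> 1) \<in># eigenvalues_mset (map_mat complex_of_real R)"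
    unfolding eig using n by simp
  then have "\<bar>\<mu> 1\<bar> \<le> 1"
    using row_stochastic_eigenvalue_norm_le_1[OF R] eigenvalue_iff_mem_eigenvalues_mset[OF R'] by force
  moreover have "\<mu> i \<le> \<mu> 1" using i sorted[of 1 i] by simp
  ultimately show ?thesis using i by simp
qed

section \<open>Random walks on graphs\<close>

lemma simple_graph_edgeD:
  assumes "simple_graph V E" "{u, v} \<in> E"
  shows "u \<in> V" "v \<in> V" "u \<noteq> v"
proof -
  obtain a b where "{u, v} = {a, b}" "a \<noteq> b" "a \<in> V" "b \<in> V"
    using assms unfolding simple_graph_def by blast
  then have "(u = a \<and> v = b) \<or> (u = b \<and> v = a)" "a \<noteq> b" "a \<in> V" "b \<in> V"
    by (simp_all add: doubleton_eq_iff)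
  then show "u \<in> V" "v \<in> V" "u \<noteq> v" by auto
qed

lemma simple_graph_finite_edges:
  assumes "simple_graph V E"
  shows "finite E"
proof -
  have "E \<subseteq> Pow V" using assms unfolding simple_graph_def by force
  moreover have "finite V" using assms unfolding simple_graph_def by simp
  ultimately show ?thesis by (simp add: finite_subset)
qed

lemma arcs_subset: "simple_graph V E \<Longrightarrow> arcs E \<subseteq> V \<times> V"
  unfolding arcs_def by (auto dest: simple_graph_edgeD)

lemma finite_arcs:
  assumes "simple_graph V E"
  shows "finite (arcs E)"
proof (rule finite_subset[OF arcs_subset[OF assms]])
  show "finite (V \<times> V)" using assms unfolding simple_graph_def by simp
qed

lemma card_arcs:
  assumes G: "simple_graph V E"
  shows "card (arcs E) = 2 * card E"
proof -
  have arcs_of_edge: "{(u, v). e = {u, v}} = {(a, b), (b, a)}" if "e = {a, b}" for e :: "'a set" and a b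
    using that by (auto simp: doubleton_eq_iff)
  have edge: "\<exists>a b. e = {a, b} \<and> a \<noteq> b" if "e \<in> E" for e
    using G that unfolding simple_graph_def by blast
  have "arcs E = (\<Union>e\<in>E. {(u, v). e = {u, v}})" unfolding arcs_def by auto
  also have "card \<dots> = (\<Sum>e\<in>E. card {(u, v). e = {u, v}})"
  proof (rule card_UN_disjoint[OF simple_graph_finite_edges[OF G]])
    show "\<forall>e\<in>E. finite {(u, v). e = {u, v}}" using edge arcs_of_edge by fastforce
  qed auto
  also have "\<dots> = (\<Sum>e\<in>E. 2)"
    using edge arcs_of_edge by (intro sum.cong) fastforce+
  finally show ?thesis by simp
qed

lemma neighbours_subset: "simple_graph V E \<Longrightarrow> {w. {v, w} \<in> E} \<subseteq> V"
  by (auto dest: simple_graph_edgeD)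

lemma degree_pos_of_edge:
  assumes "simple_graph V E" "{v, w} \<in> E"
  shows "0 < degree E v"
proof -
  have "finite V" using assms(1) unfolding simple_graph_def by simp
  then have "finite {w. {v, w} \<in> E}" by (rule finite_subset[OF neighbours_subset[OF assms(1)]])
  then show ?thesis unfolding degree_def using assms(2) by (auto simp: card_gt_0_iff)
qed

lemma biregular_degree_mult:
  assumes "biregular V E c d" "{u, v} \<in> E"
  shows "degree E u * degree E v = c * d"
proof -
  obtain X Y where XY: "\<forall>e\<in>E. \<exists>x\<in>X. \<exists>y\<in>Y. e = {x, y}"
    "\<forall>x\<in>X. degree E x = c" "\<forall>y\<in>Y. degree E y = d"
    using assms(1) unfolding biregular_def by blast
  then obtain x y where "x \<in> X" "y \<in> Y" "{u, v} = {x, y}" using assms(2) by meson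
  then have "degree E x = c" "degree E y = d" "(u = x \<and> v = y) \<or> (u = y \<and> v = x)"
    using XY by (simp_all add: doubleton_eq_iff)
  then show ?thesis by (metis mult.commute)
qed

lemma biregular_degree_pos:
  assumes G: "simple_graph V E" and "E \<noteq> {}" and B: "biregular V E c d" and "v \<in> V"
  shows "0 < degree E v"
proof -
  obtain X Y where XY: "X \<union> Y = V" "\<forall>e\<in>E. \<exists>x\<in>X. \<exists>y\<in>Y. e = {x, y}"
    "\<forall>x\<in>X. degree E x = c" "\<forall>y\<in>Y. degree E y = d"
    using B unfolding biregular_def by blast
  obtain e where e: "e \<in> E" using \<open>E \<noteq> {}\<close> by blast
  then obtain x y where "x \<in> X" "y \<in> Y" "e = {x, y}" using XY(2) by meson
  with e have xy: "x \<in> X" "y \<in> Y" "{x, y} \<in> E" by simp_all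
  have "0 < c" using XY(3) xy degree_pos_of_edge[OF G xy(3)] by simp
  moreover have "0 < d" using XY(4) xy degree_pos_of_edge[OF G, of y x] by (simp add: insert_commute)
  moreover have "v \<in> X \<or> v \<in> Y" using XY(1) \<open>v \<in> V\<close> by blast
  ultimately show ?thesis using XY(3,4) by auto
qed

lemma set_enum_set: "finite S \<Longrightarrow> set (enum_set S) = S"
  and distinct_enum_set: "finite S \<Longrightarrow> distinct (enum_set S)"
  unfolding enum_set_def by (metis (mono_tags, lifting) finite_distinct_list someI_ex)+

lemma length_enum_set: "finite S \<Longrightarrow> length (enum_set S) = card S"
  by (metis distinct_card distinct_enum_set set_enum_set)

lemma sum_enum_set:
  assumes "finite S"
  shows "(\<Sum>i < card S. g (enum_set S ! i)) = (\<Sum>x\<in>S. g x)"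
proof -
  have "(\<Sum>x\<in>S. g x) = sum_list (map g (enum_set S))"
    using sum.distinct_set_conv_list[OF distinct_enum_set[OF assms], of g] set_enum_set[OF assms]
    by simp
  also have "\<dots> = (\<Sum>i < card S. g (enum_set S ! i))"
    using assms by (simp add: sum_list_sum_nth length_enum_set atLeast0LessThan)
  finally show ?thesis ..
qed

definition vertex_walk_matrix :: "'a set \<Rightarrow> 'a set set \<Rightarrow> real mat" where
  "vertex_walk_matrix V E = mat_on V (\<lambda>u v. if {u, v} \<in> E then 1 / real (degree E u) else 0)"

definition head_matrix :: "'a set \<Rightarrow> 'a set set \<Rightarrow> complex mat" where
  "head_matrix V E = mat (card (arcs E)) (card V)
     (\<lambda>(i, j). if snd (enum_set (arcs E) ! i) = enum_set V ! j then 1 else 0)"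

definition out_arc_matrix :: "'a set \<Rightarrow> 'a set set \<Rightarrow> complex mat" where
  "out_arc_matrix V E = mat (card V) (card (arcs E))
     (\<lambda>(i, j). if fst (enum_set (arcs E) ! j) = enum_set V ! i
               then 1 / of_nat (degree E (enum_set V ! i)) else 0)"

lemma dim_vertex_walk_matrix [simp]:
  "dim_row (vertex_walk_matrix V E) = card V" "dim_col (vertex_walk_matrix V E) = card V"
  by (simp_all add: vertex_walk_matrix_def mat_on_def)

lemma dim_head_matrix: "head_matrix V E \<in> carrier_mat (card (arcs E)) (card V)"
  and dim_out_arc_matrix: "out_arc_matrix V E \<in> carrier_mat (card V) (card (arcs E))"
  by (simp_all add: head_matrix_def out_arc_matrix_def)

lemma head_out_arc_matrix:
  assumes G: "simple_graph V E"
  shows "head_matrix V E * out_arc_matrix V E = arc_walk_matrix E"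
proof (rule eq_matI)
  have V: "finite V" using G unfolding simple_graph_def by simp
  let ?a = "enum_set (arcs E)" and ?v = "enum_set V"
  fix i j assume "i < dim_row (arc_walk_matrix E)" "j < dim_col (arc_walk_matrix E)"
  then have i: "i < card (arcs E)" and j: "j < card (arcs E)"
    by (auto simp: arc_walk_matrix_def mat_on_def)
  have arc: "?a ! k \<in> arcs E" if "k < card (arcs E)" for k
    using that finite_arcs[OF G] by (metis length_enum_set nth_mem set_enum_set)
  have "(head_matrix V E * out_arc_matrix V E) $$ (i, j) =
      (\<Sum>k < card V. (if snd (?a ! i) = ?v ! k then 1 else 0) *
        (if fst (?a ! j) = ?v ! k then 1 / of_nat (degree E (?v ! k)) else 0))"
    using i j by (simp add: head_matrix_def out_arc_matrix_def scalar_prod_def atLeast0LessThan)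
  also have "\<dots> = (\<Sum>u\<in>V. (if snd (?a ! i) = u then 1 else 0) *
        (if fst (?a ! j) = u then 1 / of_nat (degree E u) else 0))"
    by (rule sum_enum_set[OF V])
  also have "\<dots> = (\<Sum>u\<in>V. if u = snd (?a ! i) then
      (if fst (?a ! j) = u then 1 / of_nat (degree E u) else 0) else 0)"
    by (rule sum.cong) auto
  also have "\<dots> = (if fst (?a ! j) = snd (?a ! i) then 1 / of_nat (degree E (snd (?a ! i))) else 0)"
    using V arc[OF i] arcs_subset[OF G] by auto
  also have "\<dots> = arc_walk_matrix E $$ (i, j)"
    using i j arc[OF j] by (auto simp: arc_walk_matrix_def mat_on_def arcs_def case_prod_beta)
  finally show "(head_matrix V E * out_arc_matrix V E) $$ (i, j) = arc_walk_matrix E $$ (i, j)" .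
qed (auto simp: head_matrix_def out_arc_matrix_def arc_walk_matrix_def mat_on_def)

lemma out_arc_head_matrix:
  assumes G: "simple_graph V E"
  shows "out_arc_matrix V E * head_matrix V E = map_mat complex_of_real (vertex_walk_matrix V E)"
proof (rule eq_matI)
  have A: "finite (arcs E)" using finite_arcs[OF G] .
  let ?a = "enum_set (arcs E)" and ?v = "enum_set V"
  fix i j assume "i < dim_row (map_mat complex_of_real (vertex_walk_matrix V E))"
    "j < dim_col (map_mat complex_of_real (vertex_walk_matrix V E))"
  then have i: "i < card V" and j: "j < card V" by (auto simp: vertex_walk_matrix_def mat_on_def)
  have "(out_arc_matrix V E * head_matrix V E) $$ (i, j) =
      (\<Sum>k < card (arcs E). (if fst (?a ! k) = ?v ! i then 1 / of_nat (degree E (?v ! i)) else 0) *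
        (if snd (?a ! k) = ?v ! j then 1 else 0))"
    using i j by (simp add: head_matrix_def out_arc_matrix_def scalar_prod_def atLeast0LessThan)
  also have "\<dots> = (\<Sum>a\<in>arcs E. (if fst a = ?v ! i then 1 / of_nat (degree E (?v ! i)) else 0) *
        (if snd a = ?v ! j then 1 else 0))"
    by (rule sum_enum_set[OF A])
  also have "\<dots> = (\<Sum>a\<in>arcs E. if a = (?v ! i, ?v ! j) then 1 / of_nat (degree E (?v ! i)) else 0)"
    by (rule sum.cong) auto
  also have "\<dots> = map_mat complex_of_real (vertex_walk_matrix V E) $$ (i, j)"
    using A i j by (simp add: vertex_walk_matrix_def mat_on_def arcs_def)
  finally show "(out_arc_matrix V E * head_matrix V E) $$ (i, j) =
      map_mat complex_of_real (vertex_walk_matrix V E) $$ (i, j)" .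
qed (auto simp: head_matrix_def out_arc_matrix_def vertex_walk_matrix_def mat_on_def)

lemma row_stochastic_vertex_walk:
  assumes G: "simple_graph V E" and deg: "\<And>v. v \<in> V \<Longrightarrow> 0 < degree E v"
  shows "row_stochastic (vertex_walk_matrix V E)"
  unfolding row_stochastic_def dim_vertex_walk_matrix
proof (intro allI impI conjI)
  have V: "finite V" using G unfolding simple_graph_def by simp
  fix i assume i: "i < card V"
  define u where "u = enum_set V ! i"
  have u: "u \<in> V" unfolding u_def using V i by (metis length_enum_set nth_mem set_enum_set)
  have entry: "vertex_walk_matrix V E $$ (i, j) = (if {u, enum_set V ! j} \<in> E then 1 / real (degree E u) else 0)"
    if "j < card V" for j
    using i that by (simp add: vertex_walk_matrix_def mat_on_def u_def)
  show "0 \<le> vertex_walk_matrix V E $$ (i, j)" if "j < card V" for j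
    using entry[OF that] by simp
  have "(\<Sum>j < card V. vertex_walk_matrix V E $$ (i, j)) =
      (\<Sum>j < card V. if {u, enum_set V ! j} \<in> E then 1 / real (degree E u) else 0)"
    by (rule sum.cong) (simp_all add: entry)
  also have "\<dots> = (\<Sum>w\<in>V. if {u, w} \<in> E then 1 / real (degree E u) else 0)"
    by (rule sum_enum_set[OF V])
  also have "\<dots> = real (card {w\<in>V. {u, w} \<in> E}) / real (degree E u)"
    using V by (simp add: sum.If_cases Int_def)
  also have "{w\<in>V. {u, w} \<in> E} = {w. {u, w} \<in> E}"
    using neighbours_subset[OF G] by blast
  finally show "(\<Sum>j < card V. vertex_walk_matrix V E $$ (i, j)) = 1"
    using deg[OF u] by (simp add: degree_def)
qed

lemma vertex_walk_similar_adjacency: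
  assumes G: "simple_graph V E" and "E \<noteq> {}" and B: "biregular V E c d"
  shows "similar_mat (map_mat complex_of_real (vertex_walk_matrix V E))
    ((1 / complex_of_real (sqrt (real c * real d))) \<cdot>\<^sub>m adjacency_matrix V E)"
proof -
  have V: "finite V" using G unfolding simple_graph_def by simp
  let ?v = "enum_set V" and ?s = "sqrt (real c * real d)"
  let ?A = "(1 / complex_of_real ?s) \<cdot>\<^sub>m adjacency_matrix V E"
  define \<sigma> where "\<sigma> i = complex_of_real (sqrt (real (degree E (?v ! i))))" for i
  have deg: "0 < degree E (?v ! i)" if "i < card V" for i
    using biregular_degree_pos[OF G \<open>E \<noteq> {}\<close> B] V that by (metis length_enum_set nth_mem set_enum_set)
  have scaling: "1 / real a = 1 / sqrt (real a * real b) * sqrt (real b) / sqrt (real a)"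
    if "0 < a" "0 < b" for a b :: nat
    using that by (simp add: real_sqrt_mult field_simps)
  have "map_mat complex_of_real (vertex_walk_matrix V E) =
      mat (card V) (card V) (\<lambda>(i, j). ?A $$ (i, j) * \<sigma> j / \<sigma> i)"
  proof (rule eq_matI)
    fix i j assume "i < dim_row (mat (card V) (card V) (\<lambda>(i, j). ?A $$ (i, j) * \<sigma> j / \<sigma> i))"
      "j < dim_col (mat (card V) (card V) (\<lambda>(i, j). ?A $$ (i, j) * \<sigma> j / \<sigma> i))"
    then have i: "i < card V" and j: "j < card V" by auto
    show "map_mat complex_of_real (vertex_walk_matrix V E) $$ (i, j) =
        mat (card V) (card V) (\<lambda>(i, j). ?A $$ (i, j) * \<sigma> j / \<sigma> i) $$ (i, j)"
    proof (cases "{?v ! i, ?v ! j} \<in> E")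
      case True
      then have "?s = sqrt (real (degree E (?v ! i)) * real (degree E (?v ! j)))"
        using biregular_degree_mult[OF B True] by (simp flip: of_nat_mult)
      then show ?thesis
        using i j True scaling[OF deg[OF i] deg[OF j]]
        by (simp add: vertex_walk_matrix_def adjacency_matrix_def mat_on_def \<sigma>_def flip: of_real_mult of_real_divide)
    qed (use i j in \<open>simp add: vertex_walk_matrix_def adjacency_matrix_def mat_on_def\<close>)
  qed auto
  also have "similar_mat \<dots> ?A"
    using deg by (intro similar_mat_diag_scaling) (auto simp: adjacency_matrix_def mat_on_def \<sigma>_def)
  finally show ?thesis .
qed

lemma eigenvalues_vertex_walk:
  assumes G: "simple_graph V E" and "E \<noteq> {}" and B: "biregular V E c d"
  shows "eigenvalues_mset (map_mat complex_of_real (vertex_walk_matrix V E)) =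
    image_mset (\<lambda>z. z / complex_of_real (sqrt (real c * real d))) (eigenvalues_mset (adjacency_matrix V E))"
proof -
  let ?k = "1 / complex_of_real (sqrt (real c * real d))"
  obtain e where e: "e \<in> E" using \<open>E \<noteq> {}\<close> by blast
  then obtain u v where "e = {u, v}" using G unfolding simple_graph_def by meson
  with e have uv: "{u, v} \<in> E" "{v, u} \<in> E" by (simp_all add: insert_commute)
  have "0 < degree E u * degree E v"
    using degree_pos_of_edge[OF G uv(1)] degree_pos_of_edge[OF G uv(2)] by simp
  then have "?k \<noteq> 0" using biregular_degree_mult[OF B uv(1)] by simp
  then have "eigenvalues_mset (?k \<cdot>\<^sub>m adjacency_matrix V E) =
      image_mset ((*) ?k) (eigenvalues_mset (adjacency_matrix V E))"
    by (intro eigenvalues_mset_smult[where n = "card V"]) (simp add: adjacency_matrix_def mat_on_def)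
  also have "\<dots> = image_mset (\<lambda>z. z / complex_of_real (sqrt (real c * real d)))
      (eigenvalues_mset (adjacency_matrix V E))"
    by (intro image_mset_cong) simp
  finally show ?thesis
    unfolding eigenvalues_mset_def char_poly_similar[OF vertex_walk_similar_adjacency[OF assms]] .
qed

lemma kemeny_vertex_walk_biregular:
  assumes G: "simple_graph V E" and "E \<noteq> {}" and B: "biregular V E c d"
    and sorted: "\<And>i j. 1 \<le> i \<Longrightarrow> i \<le> j \<Longrightarrow> j \<le> card V \<Longrightarrow> lam j \<le> lam i"
    and eig: "eigenvalues_mset (adjacency_matrix V E) =
      image_mset (\<lambda>i. complex_of_real (lam i)) (mset_set {1..card V})"
  shows "kemeny (map_mat complex_of_real (vertex_walk_matrix V E)) = complex_of_real
    (\<Sum>i = 2..card V. sqrt (real c * real d) / (sqrt (real c * real d) - lam i))"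
proof -
  let ?s = "sqrt (real c * real d)" and ?n = "card V"
  define \<mu> where "\<mu> i = lam i / ?s" for i
  have V: "finite V" and "0 < ?n"
    using G \<open>E \<noteq> {}\<close> unfolding simple_graph_def by (auto simp: card_gt_0_iff)
  have eig_walk: "eigenvalues_mset (map_mat complex_of_real (vertex_walk_matrix V E)) =
      image_mset (\<lambda>i. complex_of_real (\<mu> i)) (mset_set {1..?n})"
    unfolding eigenvalues_vertex_walk[OF G \<open>E \<noteq> {}\<close> B] eig \<mu>_def by (simp add: image_mset.compositionality o_def)
  have "0 \<le> ?s" by simp
  then have "\<mu> j \<le> \<mu> i" if "1 \<le> i" "i \<le> j" "j \<le> ?n" for i j
    unfolding \<mu>_def using sorted[OF that] by (simp add: divide_right_mono)
  then have "\<mu> 1 = 1"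
    using row_stochastic_top_eigenvalue[OF _ row_stochastic_vertex_walk[OF G] \<open>0 < ?n\<close> eig_walk]
      biregular_degree_pos[OF G \<open>E \<noteq> {}\<close> B] by (simp add: vertex_walk_matrix_def mat_on_def)
  then have "?s \<noteq> 0" unfolding \<mu>_def by auto
  have one_minus_div: "1 / (1 - z / w) = w / (w - z)" if "w \<noteq> 0" for z w :: complex
    using that by (cases "w = z") (simp_all add: field_simps)
  have "kemeny (map_mat complex_of_real (vertex_walk_matrix V E)) = (\<Sum>i\<in>{1..?n}. 1 / (1 - of_real (\<mu> i)))"
    unfolding kemeny_eq_sum_eigenvalues eig_walk by (simp add: sum_unfold_sum_mset multiset.map_comp o_def)
  also have "\<dots> = (\<Sum>i\<in>{2..?n}. 1 / (1 - of_real (\<mu> i)))"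
    using \<open>0 < ?n\<close> \<open>\<mu> 1 = 1\<close> by (simp add: sum.atLeast_Suc_atMost numeral_2_eq_2)
  also have "\<dots> = of_real (\<Sum>i = 2..?n. ?s / (?s - lam i))"
    unfolding of_real_sum \<mu>_def using one_minus_div \<open>?s \<noteq> 0\<close> by simp
  finally show ?thesis .
qed

theorem lemma4p1:
  fixes V :: "'a set" and E :: "'a set set" and c d :: nat and lam :: "nat \<Rightarrow> real"
  assumes "simple_graph V E"
    and "connected_graph V E"
    and "E \<noteq> {}"
    and "biregular V E c d"
    and "\<And>i j. 1 \<le> i \<Longrightarrow> i \<le> j \<Longrightarrow> j \<le> card V \<Longrightarrow> lam j \<le> lam i"
    and "eigenvalues_mset (adjacency_matrix V E) = image_mset (\<lambda>i. complex_of_real (lam i)) (mset_set {1..card V})"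
  shows "kemeny_edge E = complex_of_real
           (2 * real (card E) - real (card V) +
            (\<Sum>i = 2..card V. sqrt (real c * real d) / (sqrt (real c * real d) - lam i)))"
proof -
  have "kemeny_edge E = kemeny (out_arc_matrix V E * head_matrix V E)
      + of_nat (card (arcs E)) - of_nat (card V)"
    unfolding kemeny_edge_def head_out_arc_matrix[OF assms(1), symmetric]
    by (rule kemeny_mult_commute[OF dim_head_matrix dim_out_arc_matrix])
  also have "kemeny (out_arc_matrix V E * head_matrix V E) = complex_of_real
      (\<Sum>i = 2..card V. sqrt (real c * real d) / (sqrt (real c * real d) - lam i))"
    unfolding out_arc_head_matrix[OF assms(1)]
    by (rule kemeny_vertex_walk_biregular[OF assms(1,3-6)])
  finally show ?thesis
    unfolding card_arcs[OF assms(1)] by simp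
qed

end
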